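(* There is a constant $c>0$ such that for all $n\in\mathbb{N}$ and all integers $k\ge 2$, the randomized query complexity of $TARSKI(n,k)$ is at least $c\cdot\frac{k\log n}{\log k}$.
   Context: For $k,n\in\mathbb{N}$ let $\mathcal{L}_n^k=\{0,1,\ldots,n-1\}^k$ with the componentwise order. $TARSKI(n,k)$: given oracle access to an unknown monotone $f:\mathcal{L}_n^k\to\mathcal{L}_n^k$ (a query of $v$ returns $f(v)$), find $x$ with $f(x)=x$. The randomized query complexity is the minimum, over randomized algorithms that on every input output a fixed point with probability at least $9/10$, of the worst-case expected number of queries (expectation over the algorithm's coins). *)

theory Defs
  imports "HOL-Probability.Probability"
begin

definition grid :: "nat \<Rightarrow> nat \<Rightarrow> nat list set" where
  "grid n k = {v. length v = k \<and> (\<forall>i<k. v ! i < n)}"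

definition leq_cw :: "nat list \<Rightarrow> nat list \<Rightarrow> bool" where
  "leq_cw v w \<longleftrightarrow> list_all2 (\<le>) v w"

text \<open>Inputs of TARSKI(n,k): monotone self-maps of the grid. Values outside the grid
  are fixed to a junk value [] so that each input is a single function.\<close>
definition tarski_inputs :: "nat \<Rightarrow> nat \<Rightarrow> (nat list \<Rightarrow> nat list) set" where
  "tarski_inputs n k = {f.
     (\<forall>v\<in>grid n k. f v \<in> grid n k) \<and>
     (\<forall>v\<in>grid n k. \<forall>w\<in>grid n k. leq_cw v w \<longrightarrow> leq_cw (f v) (f w)) \<and>
     (\<forall>v. v \<notin> grid n k \<longrightarrow> f v = [])}"

text \<open>Deterministic query algorithms = decision trees: a leaf outputs a point,
  an inner node queries a point and branches on the answer.\<close>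
datatype dtree = Leaf "nat list" | Query "nat list" "nat list \<Rightarrow> dtree"

primrec num_queries :: "dtree \<Rightarrow> (nat list \<Rightarrow> nat list) \<Rightarrow> nat" where
  "num_queries (Leaf x) f = 0"
| "num_queries (Query v g) f = Suc (num_queries (g (f v)) f)"

primrec tree_output :: "dtree \<Rightarrow> (nat list \<Rightarrow> nat list) \<Rightarrow> nat list" where
  "tree_output (Leaf x) f = x"
| "tree_output (Query v g) f = tree_output (g (f v)) f"

definition is_fixed_point :: "nat \<Rightarrow> nat \<Rightarrow> (nat list \<Rightarrow> nat list) \<Rightarrow> nat list \<Rightarrow> bool" where
  "is_fixed_point n k f x \<longleftrightarrow> x \<in> grid n k \<and> f x = x"

text \<open>Randomized algorithms = probability distributions over decision trees.
  Valid: on every input, outputs a fixed point with probability at least 9/10.\<close>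
definition valid_rand_alg :: "nat \<Rightarrow> nat \<Rightarrow> dtree pmf \<Rightarrow> bool" where
  "valid_rand_alg n k A \<longleftrightarrow>
     (\<forall>f\<in>tarski_inputs n k.
        measure_pmf.prob A {T. is_fixed_point n k f (tree_output T f)} \<ge> 9/10)"

definition expected_queries :: "dtree pmf \<Rightarrow> (nat list \<Rightarrow> nat list) \<Rightarrow> ennreal" where
  "expected_queries A f = (\<integral>\<^sup>+ T. ennreal (real (num_queries T f)) \<partial>measure_pmf A)"

definition rand_query_complexity :: "nat \<Rightarrow> nat \<Rightarrow> ennreal" where
  "rand_query_complexity n k =
     (INF A\<in>{A. valid_rand_alg n k A}. SUP f\<in>tarski_inputs n k. expected_queries A f)"

end

theory Submission
  imports Defs
begin

(* For each point x of the grid, the hard input lex_instance n k x moves a query v one step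
   towards x at the first coordinate where they differ and pushes all later coordinates to
   the extreme value (0 when stepping up, n - 1 when stepping down) that keeps the map
   monotone.  Its only fixed point is x, and as x ranges over the grid each query has at most
   2k + 1 possible answers, so a decision tree that stops within m queries can output at most
   (2k + 1)^m distinct points.  If 2 (2k + 1)^m <= n^k, averaging over a uniformly random x
   (Yao's principle) shows that an algorithm succeeding with probability 9/10 makes more than
   m queries on a 2/5 fraction of the inputs on average, so its worst-case expected cost is at
   least 2/5 (m + 1).  Taking m = floor (k ln n / (2 ln (2k + 1))) gives the bound with
   c = 1/15. *)

section \<open>Lexicographic step maps\<close>

fun lex_step :: "nat \<Rightarrow> nat list \<Rightarrow> nat list \<Rightarrow> nat list" where
  "lex_step n (a # xs) (b # vs) =
     (if b = a then b # lex_step n xs vs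
      else if b < a then Suc b # replicate (length vs) 0
      else (b - 1) # replicate (length vs) (n - 1))"
| "lex_step n _ _ = []"

lemma length_lex_step: "length x = length v \<Longrightarrow> length (lex_step n x v) = length v"
  by (induction n x v rule: lex_step.induct) auto

lemma set_lex_step_subset:
  "length x = length v \<Longrightarrow> set x \<subseteq> {..<n} \<Longrightarrow> set v \<subseteq> {..<n} \<Longrightarrow>
    set (lex_step n x v) \<subseteq> {..<n}"
  by (induction n x v rule: lex_step.induct) auto

lemma lex_step_fixed_point_eq: "length x = length v \<Longrightarrow> lex_step n x v = v \<Longrightarrow> v = x"
  by (induction n x v rule: lex_step.induct) (auto split: if_splits)

lemma list_all2_replicate_0_le: "list_all2 (\<le>) (replicate (length w) (0::nat)) w"
  by (induction w) auto

lemma list_all2_le_replicate_bound: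
  "set v \<subseteq> {..<n::nat} \<Longrightarrow> list_all2 (\<le>) v (replicate (length v) (n - 1))"
  by (induction v) auto

lemma lex_step_mono:
  assumes "length x = length v" "set x \<subseteq> {..<n}" "set v \<subseteq> {..<n}" "set w \<subseteq> {..<n}"
    and "list_all2 (\<le>) v w"
  shows "list_all2 (\<le>) (lex_step n x v) (lex_step n x w)"
  using assms
proof (induction x arbitrary: v w)
  case Nil
  then show ?case by simp
next
  case (Cons a xs)
  then obtain b vs c ws where v: "v = b # vs" and w: "w = c # ws" and "b \<le> c"
    and vs_ws: "list_all2 (\<le>) vs ws"
    by (cases v; cases w) auto
  have lengths: "length vs = length xs" "length ws = length xs"
    using Cons.prems v w by (auto dest: list_all2_lengthD)
  have "list_all2 (\<le>) (lex_step n xs vs) (replicate (length ws) (n - 1))"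
    using list_all2_le_replicate_bound[of "lex_step n xs vs" n] set_lex_step_subset[of xs vs n]
      Cons.prems v lengths by (simp add: length_lex_step)
  moreover have "list_all2 (\<le>) (replicate (length ws) 0) (lex_step n xs ws)"
    using list_all2_replicate_0_le[of "lex_step n xs ws"] lengths by (simp add: length_lex_step)
  ultimately show ?case
    using list_all2_replicate_0_le[of "replicate (length ws) (n - 1)"]
      list_all2_refl[of "(\<le>)", OF order_refl] Cons.IH[of vs ws] Cons.prems \<open>b \<le> c\<close> vs_ws lengths
    unfolding v w by auto
qed

lemma card_lex_step_image_le:
  assumes "finite X" "\<forall>x\<in>X. length x = length v"
  shows "card ((\<lambda>x. lex_step n x v) ` X) \<le> 2 * length v + 1"
  using assms
proof (induction v arbitrary: X)
  case Nil
  have "card ((\<lambda>x. lex_step n x []) ` X) \<le> card {[] :: nat list}"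
    by (rule card_mono) auto
  then show ?case by simp
next
  case (Cons b vs)
  let ?jumps = "{Suc b # replicate (length vs) 0, (b - 1) # replicate (length vs) (n - 1)}"
  let ?tails = "(\<lambda>x. lex_step n x vs) ` tl ` X"
  have "(\<lambda>x. lex_step n x (b # vs)) ` X \<subseteq> ?jumps \<union> Cons b ` ?tails"
  proof
    fix y assume "y \<in> (\<lambda>x. lex_step n x (b # vs)) ` X"
    then obtain a xs where "a # xs \<in> X" and y: "y = lex_step n (a # xs) (b # vs)"
      using Cons.prems by (auto simp: length_Suc_conv)
    then have "lex_step n xs vs \<in> ?tails"
      by (metis image_eqI list.sel(3))
    with y show "y \<in> ?jumps \<union> Cons b ` ?tails"
      by auto
  qed
  then have "card ((\<lambda>x. lex_step n x (b # vs)) ` X) \<le> card (?jumps \<union> Cons b ` ?tails)"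
    by (rule card_mono[rotated]) (simp add: Cons.prems(1))
  also have "\<dots> \<le> card ?jumps + card (Cons b ` ?tails)"
    by (rule card_Un_le)
  also have "\<dots> \<le> 2 + (2 * length vs + 1)"
    using Cons.IH[of "tl ` X"] Cons.prems by (intro add_mono) (simp_all add: card_insert_if card_image)
  finally show ?case by simp
qed

section \<open>Hard instances\<close>

lemma mem_grid_iff: "v \<in> grid n k \<longleftrightarrow> length v = k \<and> set v \<subseteq> {..<n}"
  unfolding grid_def by (auto simp: in_set_conv_nth subset_iff)

lemma grid_eq_lists_length: "grid n k = {xs. set xs \<subseteq> {..<n} \<and> length xs = k}"
  by (auto simp: mem_grid_iff)

lemma finite_grid: "finite (grid n k)"
  unfolding grid_eq_lists_length by (rule finite_lists_length_eq) simp

lemma card_grid: "card (grid n k) = n ^ k"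
  unfolding grid_eq_lists_length by (subst card_lists_length_eq) simp_all

definition lex_instance :: "nat \<Rightarrow> nat \<Rightarrow> nat list \<Rightarrow> nat list \<Rightarrow> nat list" where
  "lex_instance n k x v = (if v \<in> grid n k then lex_step n x v else [])"

lemma lex_instance_in_tarski_inputs: "x \<in> grid n k \<Longrightarrow> lex_instance n k x \<in> tarski_inputs n k"
  unfolding tarski_inputs_def lex_instance_def leq_cw_def
  by (auto simp: mem_grid_iff length_lex_step set_lex_step_subset intro!: lex_step_mono)

lemma fixed_point_lex_instance:
  "x \<in> grid n k \<Longrightarrow> is_fixed_point n k (lex_instance n k x) y \<Longrightarrow> y = x"
  unfolding is_fixed_point_def lex_instance_def
  by (auto simp: mem_grid_iff intro: lex_step_fixed_point_eq)

lemma card_lex_instance_answers_le: "card ((\<lambda>x. lex_instance n k x v) ` grid n k) \<le> 2 * k + 1"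
proof (cases "v \<in> grid n k")
  case True
  then show ?thesis
    using card_lex_step_image_le[where X = "grid n k" and v = v and n = n]
    by (simp add: lex_instance_def mem_grid_iff finite_grid)
next
  case False
  have "card ((\<lambda>x. lex_instance n k x v) ` grid n k) \<le> card {[] :: nat list}"
    by (rule card_mono) (auto simp: lex_instance_def False)
  then show ?thesis by simp
qed

section \<open>Counting outputs of decision trees\<close>

lemma card_tree_outputs_le:
  fixes \<phi> :: "'x \<Rightarrow> nat list \<Rightarrow> nat list"
  assumes "finite X" and answers: "\<And>v. card ((\<lambda>x. \<phi> x v) ` X) \<le> B" and "B \<ge> 1"
  shows "card ((\<lambda>x. tree_output T (\<phi> x)) ` {x\<in>X. num_queries T (\<phi> x) \<le> m}) \<le> B ^ m"
proof (induction T arbitrary: m)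
  case (Leaf y)
  have "card ((\<lambda>x. tree_output (Leaf y) (\<phi> x)) ` {x\<in>X. num_queries (Leaf y) (\<phi> x) \<le> m})
      \<le> card {y}"
    by (rule card_mono) auto
  also have "\<dots> \<le> B ^ m" using \<open>B \<ge> 1\<close> by simp
  finally show ?case .
next
  case (Query v g)
  show ?case
  proof (cases m)
    case 0
    then show ?thesis by simp
  next
    case (Suc m')
    let ?answers = "(\<lambda>x. \<phi> x v) ` X"
    let ?outputs = "\<lambda>a. (\<lambda>x. tree_output (g a) (\<phi> x)) ` {x\<in>X. num_queries (g a) (\<phi> x) \<le> m'}"
    have "(\<lambda>x. tree_output (Query v g) (\<phi> x)) ` {x\<in>X. num_queries (Query v g) (\<phi> x) \<le> m}
        \<subseteq> (\<Union>a\<in>?answers. ?outputs a)"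
      using Suc by auto
    then have "card ((\<lambda>x. tree_output (Query v g) (\<phi> x)) ` {x\<in>X. num_queries (Query v g) (\<phi> x) \<le> m})
        \<le> card (\<Union>a\<in>?answers. ?outputs a)"
      by (rule card_mono[rotated]) (simp add: \<open>finite X\<close>)
    also have "\<dots> \<le> (\<Sum>a\<in>?answers. card (?outputs a))"
      by (rule card_UN_le) (simp add: \<open>finite X\<close>)
    also have "\<dots> \<le> card ?answers * B ^ m'"
      using sum_bounded_above[of ?answers "\<lambda>a. card (?outputs a)" "B ^ m'"] Query.IH by simp
    also have "\<dots> \<le> B * B ^ m'"
      using answers[of v] by (rule mult_right_mono) simp
    finally show ?thesis using Suc by simp
  qed
qed

lemma card_solved_inputs_le:
  fixes \<phi> :: "nat list \<Rightarrow> nat list \<Rightarrow> nat list"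
  assumes "finite X" and "\<And>v. card ((\<lambda>x. \<phi> x v) ` X) \<le> B" and "B \<ge> 1"
    and unique: "\<And>x y. x \<in> X \<Longrightarrow> P x y \<Longrightarrow> y = x"
  shows "(m + 1) * card {x\<in>X. P x (tree_output T (\<phi> x))}
    \<le> (\<Sum>x\<in>X. num_queries T (\<phi> x)) + (m + 1) * B ^ m"
proof -
  let ?out = "\<lambda>x. tree_output T (\<phi> x)" and ?q = "\<lambda>x. num_queries T (\<phi> x)"
  let ?fast = "{x\<in>X. ?q x \<le> m}" and ?slow = "{x\<in>X. m < ?q x}"
  have "{x\<in>X. P x (?out x)} \<subseteq> ?out ` ?fast \<union> ?slow"
  proof
    fix x assume x: "x \<in> {x\<in>X. P x (?out x)}"
    show "x \<in> ?out ` ?fast \<union> ?slow"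
    proof (cases "?q x \<le> m")
      case True
      have "x \<in> ?fast" using x True by simp
      then have "?out x \<in> ?out ` ?fast" by (rule imageI)
      moreover have "?out x = x" using unique[of x "?out x"] x by simp
      ultimately show ?thesis by simp
    qed (use x in simp)
  qed
  then have "card {x\<in>X. P x (?out x)} \<le> card (?out ` ?fast \<union> ?slow)"
    by (rule card_mono[rotated]) (simp add: \<open>finite X\<close>)
  also have "\<dots> \<le> B ^ m + card ?slow"
    using card_Un_le[of "?out ` ?fast" ?slow]
      card_tree_outputs_le[where \<phi> = \<phi> and B = B and T = T and m = m, OF assms(1-3)]
    by linarith
  finally have solved: "card {x\<in>X. P x (?out x)} \<le> B ^ m + card ?slow" .
  have "(m + 1) * card ?slow = (\<Sum>x\<in>?slow. m + 1)" by simp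
  also have "\<dots> \<le> (\<Sum>x\<in>?slow. ?q x)" by (rule sum_mono) auto
  also have "\<dots> \<le> (\<Sum>x\<in>X. ?q x)" by (rule sum_mono2) (use \<open>finite X\<close> in auto)
  finally have "(m + 1) * card ?slow \<le> (\<Sum>x\<in>X. ?q x)" .
  moreover have "(m + 1) * card {x\<in>X. P x (?out x)} \<le> (m + 1) * B ^ m + (m + 1) * card ?slow"
    using mult_le_mono2[OF solved, of "m + 1"] by (simp only: add_mult_distrib2)
  ultimately show ?thesis by linarith
qed

section \<open>Averaging over inputs\<close>

lemma nn_integral_card_Collect:
  assumes "finite X"
  shows "(\<integral>\<^sup>+T. of_nat (card {x\<in>X. Q x T}) \<partial>measure_pmf A)
    = (\<Sum>x\<in>X. emeasure (measure_pmf A) {T. Q x T})"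
proof -
  have "of_nat (card {x\<in>X. Q x T}) = (\<Sum>x\<in>X. indicator {T. Q x T} T :: ennreal)" for T
    using sum.inter_filter[OF assms, of "\<lambda>_. 1 :: ennreal" "\<lambda>x. Q x T"]
    by (simp add: indicator_def of_bool_def)
  then show ?thesis
    by (simp add: nn_integral_sum)
qed

lemma sum_expected_queries_ge:
  fixes \<phi> :: "nat list \<Rightarrow> nat list \<Rightarrow> nat list" and A :: "dtree pmf"
  assumes "finite X" and "\<And>v. card ((\<lambda>x. \<phi> x v) ` X) \<le> B" and "B \<ge> 1"
    and "\<And>x y. x \<in> X \<Longrightarrow> P x y \<Longrightarrow> y = x"
    and success: "\<And>x. x \<in> X \<Longrightarrow> p \<le> measure_pmf.prob A {T. P x (tree_output T (\<phi> x))}"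
  shows "of_nat (m + 1) * (of_nat (card X) * ennreal p)
    \<le> (\<Sum>x\<in>X. expected_queries A (\<phi> x)) + of_nat ((m + 1) * B ^ m)"
proof -
  let ?solved = "\<lambda>T. card {x\<in>X. P x (tree_output T (\<phi> x))}"
  let ?queries = "\<lambda>T. \<Sum>x\<in>X. num_queries T (\<phi> x)"
  have "of_nat (card X) * ennreal p \<le> (\<Sum>x\<in>X. emeasure (measure_pmf A) {T. P x (tree_output T (\<phi> x))})"
    using success by (intro sum_bounded_below) (simp add: measure_pmf.emeasure_eq_measure ennreal_leI)
  also have "\<dots> = (\<integral>\<^sup>+T. of_nat (?solved T) \<partial>measure_pmf A)"
    by (rule nn_integral_card_Collect[symmetric, OF \<open>finite X\<close>])
  finally have "of_nat (m + 1) * (of_nat (card X) * ennreal p)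
      \<le> of_nat (m + 1) * (\<integral>\<^sup>+T. of_nat (?solved T) \<partial>measure_pmf A)"
    by (rule mult_left_mono) simp
  also have "\<dots> = (\<integral>\<^sup>+T. of_nat ((m + 1) * ?solved T) \<partial>measure_pmf A)"
    unfolding of_nat_mult by (rule nn_integral_cmult[symmetric]) simp
  also have "\<dots> \<le> (\<integral>\<^sup>+T. of_nat (?queries T) + of_nat ((m + 1) * B ^ m) \<partial>measure_pmf A)"
    using card_solved_inputs_le[where \<phi> = \<phi> and B = B and P = P, OF assms(1-4)]
    by (intro nn_integral_mono) (simp only: of_nat_add[symmetric] of_nat_le_iff)
  also have "\<dots> = (\<integral>\<^sup>+T. of_nat (?queries T) \<partial>measure_pmf A) + of_nat ((m + 1) * B ^ m)"
    by (simp add: nn_integral_add measure_pmf.emeasure_space_1)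
  also have "(\<integral>\<^sup>+T. of_nat (?queries T) \<partial>measure_pmf A) = (\<Sum>x\<in>X. expected_queries A (\<phi> x))"
    unfolding of_nat_sum expected_queries_def ennreal_of_nat_eq_real_of_nat[symmetric]
    by (rule nn_integral_sum) simp
  finally show ?thesis .
qed

lemma expected_cost_ge_of_average:
  fixes N C m :: nat and S :: ennreal
  assumes average: "of_nat (m + 1) * (of_nat N * ennreal (9 / 10)) \<le> of_nat N * S + of_nat C"
    and "2 * C \<le> (m + 1) * N" and "N > 0"
  shows "ennreal (2 / 5 * (real m + 1)) \<le> S"
proof (cases S)
  case (real s)
  have "0 \<le> real (m + 1)" "0 \<le> real N" "0 \<le> (9 / 10 :: real)"
    by simp_all
  then have "of_nat (m + 1) * (of_nat N * ennreal (9 / 10)) = ennreal (real (m + 1) * (real N * (9 / 10)))"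
    unfolding ennreal_of_nat_eq_real_of_nat by (simp only: ennreal_mult mult_nonneg_nonneg)
  moreover have "of_nat N * S + of_nat C = ennreal (real N * s + real C)"
    using real by (simp add: ennreal_of_nat_eq_real_of_nat ennreal_mult ennreal_plus)
  ultimately have "real (m + 1) * (real N * (9 / 10)) \<le> real N * s + real C"
    using average real by (simp only: ennreal_le_iff add_nonneg_nonneg mult_nonneg_nonneg of_nat_0_le_iff)
  moreover have "2 * real C \<le> real (m + 1) * real N"
    using \<open>2 * C \<le> (m + 1) * N\<close> by (metis of_nat_le_iff of_nat_mult of_nat_numeral)
  ultimately have "real N * (2 / 5 * (real m + 1)) \<le> real N * s"
    by (simp add: algebra_simps)
  then show ?thesis
    using real \<open>N > 0\<close> by (simp add: ennreal_leI)
qed simp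

lemma rand_query_complexity_ge:
  assumes budget: "2 * (2 * k + 1) ^ m \<le> n ^ k"
  shows "ennreal (2 / 5 * (real m + 1)) \<le> rand_query_complexity n k"
  unfolding rand_query_complexity_def
proof (rule INF_greatest)
  fix A assume "A \<in> {A. valid_rand_alg n k A}"
  define S where "S = (SUP f\<in>tarski_inputs n k. expected_queries A f)"
  have success: "9 / 10 \<le> measure_pmf.prob A {T. is_fixed_point n k (lex_instance n k x)
      (tree_output T (lex_instance n k x))}" if "x \<in> grid n k" for x
    using \<open>A \<in> {A. valid_rand_alg n k A}\<close> lex_instance_in_tarski_inputs[OF that]
    unfolding valid_rand_alg_def by blast
  have "of_nat (m + 1) * (of_nat (card (grid n k)) * ennreal (9 / 10))
      \<le> (\<Sum>x\<in>grid n k. expected_queries A (lex_instance n k x)) + of_nat ((m + 1) * (2 * k + 1) ^ m)"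
    by (rule sum_expected_queries_ge[where \<phi> = "lex_instance n k"
          and P = "\<lambda>x. is_fixed_point n k (lex_instance n k x)",
          OF finite_grid card_lex_instance_answers_le _ fixed_point_lex_instance success]) simp_all
  moreover have "(\<Sum>x\<in>grid n k. expected_queries A (lex_instance n k x)) \<le> of_nat (card (grid n k)) * S"
    by (rule sum_bounded_above) (simp add: S_def SUP_upper lex_instance_in_tarski_inputs)
  ultimately have "of_nat (m + 1) * (of_nat (card (grid n k)) * ennreal (9 / 10))
      \<le> of_nat (card (grid n k)) * S + of_nat ((m + 1) * (2 * k + 1) ^ m)"
    by (meson add_right_mono order_trans)
  moreover have "2 * ((m + 1) * (2 * k + 1) ^ m) \<le> (m + 1) * card (grid n k)"
    using mult_le_mono2[OF budget, of "m + 1"] by (simp add: card_grid mult.left_commute)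
  moreover have "card (grid n k) > 0"
    using budget less_le_trans[of 0 "2 * (2 * k + 1) ^ m" "n ^ k"] by (simp add: card_grid)
  ultimately show "ennreal (2 / 5 * (real m + 1)) \<le> S"
    by (rule expected_cost_ge_of_average)
qed

section \<open>Choice of the query budget\<close>

lemma ln_double_plus_one_le: "k \<ge> 2 \<Longrightarrow> ln (real (2 * k + 1)) \<le> 3 * ln (real k)"
proof -
  assume "k \<ge> 2"
  then have "2 * k + 1 \<le> k * k * k"
    using mult_le_mono[of 2 k 2 k] mult_le_mono2[of 4 "k * k" k] by linarith
  then have "real (2 * k + 1) \<le> real k ^ 3"
    by (simp add: power3_eq_cube flip: of_nat_mult of_nat_le_iff)
  then have "ln (real (2 * k + 1)) \<le> ln (real k ^ 3)"
    using \<open>k \<ge> 2\<close> by (subst ln_le_cancel_iff) auto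
  also have "\<dots> = 3 * ln (real k)"
    using \<open>k \<ge> 2\<close> by (simp add: ln_realpow)
  finally show ?thesis .
qed

lemma query_budget:
  assumes "n \<ge> 2" and "k \<ge> 2"
  obtains m :: nat where "2 * (2 * k + 1) ^ m \<le> n ^ k"
    and "real k * ln (real n) / ln (real k) \<le> 6 * (real m + 1)"
proof
  define L where "L = real k * ln (real n)"
  define \<beta> where "\<beta> = ln (real (2 * k + 1))"
  define m where "m = nat \<lfloor>L / (2 * \<beta>)\<rfloor>"
  have "\<beta> > 0" using assms by (simp add: \<beta>_def)
  have "ln 2 \<le> ln (real n)" using assms by simp
  then have "2 * ln 2 \<le> L"
    unfolding L_def using assms mult_mono[of 2 "real k" "ln 2" "ln (real n)"] by simp
  then have "L \<ge> 0"
    using ln_ge_zero[of 2] by linarith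
  have "real m = of_int \<lfloor>L / (2 * \<beta>)\<rfloor>"
    unfolding m_def using \<open>L \<ge> 0\<close> \<open>\<beta> > 0\<close> by simp
  then have m_le: "real m \<le> L / (2 * \<beta>)" and m_gt: "L / (2 * \<beta>) < real m + 1"
    using floor_correct[of "L / (2 * \<beta>)"] by linarith+
  have "real ((2 * k + 1) ^ m) = exp (real m * \<beta>)"
    by (simp add: \<beta>_def exp_of_nat_mult)
  also have "\<dots> \<le> exp (L / 2)"
    using m_le \<open>\<beta> > 0\<close> by (simp add: field_simps)
  finally have "real (2 * (2 * k + 1) ^ m) \<le> 2 * exp (L / 2)" by simp
  also have "\<dots> \<le> exp (L / 2) * exp (L / 2)"
    using \<open>2 * ln 2 \<le> L\<close> exp_le_cancel_iff[of "ln 2" "L / 2"] by (intro mult_right_mono) auto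
  also have "\<dots> = exp L"
    by (simp flip: exp_add)
  also have "\<dots> = real (n ^ k)"
    using assms by (simp add: L_def exp_of_nat_mult)
  finally show "2 * (2 * k + 1) ^ m \<le> n ^ k"
    by (simp only: of_nat_le_iff)
  have "\<beta> / 3 \<le> ln (real k)" and "ln (real k) > 0"
    using ln_double_plus_one_le[OF \<open>k \<ge> 2\<close>] \<open>k \<ge> 2\<close> by (simp_all add: \<beta>_def)
  then have "L / ln (real k) \<le> L / (\<beta> / 3)"
    using \<open>L \<ge> 0\<close> \<open>\<beta> > 0\<close> by (intro divide_left_mono mult_pos_pos) auto
  also have "\<dots> = 6 * (L / (2 * \<beta>))" by simp
  also have "\<dots> \<le> 6 * (real m + 1)" using m_gt by simp
  finally show "real k * ln (real n) / ln (real k) \<le> 6 * (real m + 1)"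
    by (simp add: L_def)
qed

theorem proposition9:
  shows "\<exists>c::real. c > 0 \<and>
    (\<forall>n k::nat. n \<ge> 1 \<longrightarrow> k \<ge> 2 \<longrightarrow>
       ennreal (c * (real k * ln (real n) / ln (real k))) \<le> rand_query_complexity n k)"
proof (intro exI[of _ "1 / 15"] conjI allI impI)
  fix n k :: nat
  assume "n \<ge> 1" and "k \<ge> 2"
  show "ennreal (1 / 15 * (real k * ln (real n) / ln (real k))) \<le> rand_query_complexity n k"
  proof (cases "n = 1")
    case False
    with \<open>n \<ge> 1\<close> obtain m where budget: "2 * (2 * k + 1) ^ m \<le> n ^ k"
      and bound: "real k * ln (real n) / ln (real k) \<le> 6 * (real m + 1)"
      using query_budget[of n k] \<open>k \<ge> 2\<close> by force
    have "r \<le> 6 * (real m + 1) \<Longrightarrow> 1 / 15 * r \<le> 2 / 5 * (real m + 1)" for r :: real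
      by linarith
    then have "ennreal (1 / 15 * (real k * ln (real n) / ln (real k))) \<le> ennreal (2 / 5 * (real m + 1))"
      using bound by (intro ennreal_leI)
    also have "\<dots> \<le> rand_query_complexity n k"
      by (rule rand_query_complexity_ge[OF budget])
    finally show ?thesis .
  qed simp
qed simp

end
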